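(* Let $x$ and $y$ be sequences of length $n$ such that $y=\tau(x,i)$ for some $i\in\{1,\ldots,n-1\}$. For every $j\in\{1,\ldots,n\}\setminus\{i,i+1\}$: if $\overrightarrow{PD}_x[j]\notin\{j-i-1,\,j-i\}$ then $\overrightarrow{PD}_x[j]=\overrightarrow{PD}_y[j]$; and if $\overleftarrow{PD}_x[j]\notin\{i-j,\,i+1-j\}$ then $\overleftarrow{PD}_x[j]=\overleftarrow{PD}_y[j]$.
   Context: Sequences are finite sequences of pairwise distinct integers indexed from $1$. For $1\le i\le n-1$, $\tau(x,i)$ is obtained from $x$ by exchanging $x[i]$ and $x[i+1]$. The parent-distance table of $x$ is $\overrightarrow{PD}_x[k]=k-\max\{j<k : x[j]<x[k]\}$ if such $j$ exists and $0$ otherwise; the reverse parent-distance table is $\overleftarrow{PD}_x[k]=\min\{j : k<j\le n,\ x[j]<x[k]\}-k$ if such $j$ exists and $0$ otherwise. *)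

theory Defs
  imports Main
begin

(* Sequences are lists of pairwise distinct integers, indexed from 1:
   the k-th entry (1 <= k <= length x) is  x ! (k - 1). *)

definition at :: "int list \<Rightarrow> nat \<Rightarrow> int" where
  "at x k = x ! (k - 1)"

definition tau :: "int list \<Rightarrow> nat \<Rightarrow> int list" where
  "tau x i = x[i - 1 := at x (i + 1), i := at x i]"

definition PD_fwd :: "int list \<Rightarrow> nat \<Rightarrow> int" where
  "PD_fwd x k =
     (if \<exists>j. 1 \<le> j \<and> j < k \<and> at x j < at x k
      then int k - int (Max {j. 1 \<le> j \<and> j < k \<and> at x j < at x k})
      else 0)"

definition PD_rev :: "int list \<Rightarrow> nat \<Rightarrow> int" where
  "PD_rev x k =
     (if \<exists>j. k < j \<and> j \<le> length x \<and> at x j < at x k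
      then int (Min {j. k < j \<and> j \<le> length x \<and> at x j < at x k}) - int k
      else 0)"

end

theory Submission
  imports Defs "HOL-Combinatorics.Transposition"
begin

text \<open>Reading off the entries of \<tau>(x,i) permutes positions by the transposition of i and
  i+1. For j outside {i, i+1}, the positions before (after) j holding a smaller entry are
  therefore permuted by the same transposition, so the nearest such position can only move
  if it is i or i+1, which gives exactly the excluded values of the parent distance.\<close>

definition smaller_before :: "int list \<Rightarrow> nat \<Rightarrow> nat set" where
  "smaller_before x k = {j. 1 \<le> j \<and> j < k \<and> at x j < at x k}"

definition smaller_after :: "int list \<Rightarrow> nat \<Rightarrow> nat set" where
  "smaller_after x k = {j. k < j \<and> j \<le> length x \<and> at x j < at x k}"

lemma PD_fwd_eq_Max:
  "PD_fwd x k = (if smaller_before x k = {} then 0 else int k - int (Max (smaller_before x k)))"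
  unfolding PD_fwd_def smaller_before_def by auto

lemma PD_rev_eq_Min:
  "PD_rev x k = (if smaller_after x k = {} then 0 else int (Min (smaller_after x k)) - int k)"
  unfolding PD_rev_def smaller_after_def by auto

lemma length_tau [simp]: "length (tau x i) = length x"
  by (simp add: tau_def)

lemma at_tau:
  assumes "1 \<le> i" "i < length x" "1 \<le> k"
  shows "at (tau x i) k = at x (Transposition.transpose i (Suc i) k)"
  using assms by (auto simp: tau_def at_def transpose_def nth_list_update)

lemma image_transpose_eq_preimage:
  "Transposition.transpose a b ` A = {k. Transposition.transpose a b k \<in> A}"
  by (auto intro: image_eqI[where x = "Transposition.transpose a b _"])

lemma smaller_before_tau:
  assumes "1 \<le> i" "i < length x" "1 \<le> j" "j \<noteq> i" "j \<noteq> Suc i"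
  shows "smaller_before (tau x i) j = Transposition.transpose i (Suc i) ` smaller_before x j"
  using assms unfolding image_transpose_eq_preimage smaller_before_def
  by (auto simp: at_tau transpose_def)

lemma smaller_after_tau:
  assumes "1 \<le> i" "i < length x" "1 \<le> j" "j \<noteq> i" "j \<noteq> Suc i"
  shows "smaller_after (tau x i) j = Transposition.transpose i (Suc i) ` smaller_after x j"
  using assms unfolding image_transpose_eq_preimage smaller_after_def
  by (auto simp: at_tau transpose_def)

lemma Max_image_transpose_Suc:
  fixes A :: "nat set"
  assumes "finite A" "A \<noteq> {}" "Max A \<noteq> i" "Max A \<noteq> Suc i"
  shows "Max (Transposition.transpose i (Suc i) ` A) = Max A"
proof (rule Max_eqI)
  show "Max A \<in> Transposition.transpose i (Suc i) ` A"
    using assms by (metis Max_in transpose_apply_other image_eqI)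
next
  fix k assume "k \<in> Transposition.transpose i (Suc i) ` A"
  then obtain a where a: "a \<in> A" "k = Transposition.transpose i (Suc i) a" by blast
  have "a \<le> Max A" using a(1) assms(1) by simp
  then show "k \<le> Max A" using a(2) assms(3,4) by (auto simp: transpose_def)
qed (use assms in simp)

lemma Min_image_transpose_Suc:
  fixes A :: "nat set"
  assumes "finite A" "A \<noteq> {}" "Min A \<noteq> i" "Min A \<noteq> Suc i"
  shows "Min (Transposition.transpose i (Suc i) ` A) = Min A"
proof (rule Min_eqI)
  show "Min A \<in> Transposition.transpose i (Suc i) ` A"
    using assms by (metis Min_in transpose_apply_other image_eqI)
next
  fix k assume "k \<in> Transposition.transpose i (Suc i) ` A"
  then obtain a where a: "a \<in> A" "k = Transposition.transpose i (Suc i) a" by blast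
  have "Min A \<le> a" using a(1) assms(1) by simp
  then show "Min A \<le> k" using a(2) assms(3,4) by (auto simp: transpose_def)
qed (use assms in simp)

lemma PD_fwd_tau:
  assumes "1 \<le> i" "i < length x" "1 \<le> j" "j \<noteq> i" "j \<noteq> Suc i"
    and "PD_fwd x j \<notin> {int j - int i - 1, int j - int i}"
  shows "PD_fwd (tau x i) j = PD_fwd x j"
proof (cases "smaller_before x j = {}")
  case False
  have "finite (smaller_before x j)" by (simp add: smaller_before_def)
  moreover have "Max (smaller_before x j) \<noteq> i" "Max (smaller_before x j) \<noteq> Suc i"
    using assms(6) False by (auto simp: PD_fwd_eq_Max)
  ultimately show ?thesis
    using False by (simp add: PD_fwd_eq_Max smaller_before_tau[OF assms(1-5)] Max_image_transpose_Suc)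
qed (simp add: PD_fwd_eq_Max smaller_before_tau[OF assms(1-5)])

lemma PD_rev_tau:
  assumes "1 \<le> i" "i < length x" "1 \<le> j" "j \<noteq> i" "j \<noteq> Suc i"
    and "PD_rev x j \<notin> {int i - int j, int i + 1 - int j}"
  shows "PD_rev (tau x i) j = PD_rev x j"
proof (cases "smaller_after x j = {}")
  case False
  have "finite (smaller_after x j)" by (simp add: smaller_after_def)
  moreover have "Min (smaller_after x j) \<noteq> i" "Min (smaller_after x j) \<noteq> Suc i"
    using assms(6) False by (auto simp: PD_rev_eq_Min)
  ultimately show ?thesis
    using False by (simp add: PD_rev_eq_Min smaller_after_tau[OF assms(1-5)] Min_image_transpose_Suc)
qed (simp add: PD_rev_eq_Min smaller_after_tau[OF assms(1-5)])

theorem lemma12: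
  fixes x y :: "int list" and n i :: nat
  assumes "length x = n" and "length y = n"
    and "distinct x" and "distinct y"
    and "1 \<le> i" and "i \<le> n - 1"
    and "y = tau x i"
  shows "\<forall>j. 1 \<le> j \<and> j \<le> n \<and> j \<noteq> i \<and> j \<noteq> i + 1 \<longrightarrow>
           (PD_fwd x j \<notin> {int j - int i - 1, int j - int i} \<longrightarrow> PD_fwd x j = PD_fwd y j) \<and>
           (PD_rev x j \<notin> {int i - int j, int i + 1 - int j} \<longrightarrow> PD_rev x j = PD_rev y j)"
proof (intro allI impI conjI)
  fix j assume j: "1 \<le> j \<and> j \<le> n \<and> j \<noteq> i \<and> j \<noteq> i + 1"
  have swap: "1 \<le> i" "i < length x" "1 \<le> j" "j \<noteq> i" "j \<noteq> Suc i"
    using assms(1,5,6) j by auto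
  show "PD_fwd x j = PD_fwd y j" if "PD_fwd x j \<notin> {int j - int i - 1, int j - int i}"
    using PD_fwd_tau[OF swap that] assms(7) by simp
  show "PD_rev x j = PD_rev y j" if "PD_rev x j \<notin> {int i - int j, int i + 1 - int j}"
    using PD_rev_tau[OF swap that] assms(7) by simp
qed

end
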